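(* Let $G$ be a connected threshold graph of order $n\ge 4$ and size $m$ with $n-1<m<\binom{n}{2}$, with $c$ type 1 vertices, forward one position sequence $(f_1,\ldots,f_c)$ and numbers $F_p$ as in the context. Let $\Phi\in\mathbb{R}^{c\times c}$ be given by $\Phi_{ij}=f_{\min\{i,j\}}$, $\mathbf{1}\in\mathbb{R}^c$ the all-ones vector, and $\lambda_1,\ldots,\lambda_c$ the eigenvalues of $\Phi$ with corresponding orthonormal eigenvectors $x_1,\ldots,x_c$. Then \[F_p=\sum_{i=1}^c(\mathbf{1}^\intercal x_i)^2\,\lambda_i^p\qquad(p\in\mathbb{N}_0).\]
   Context: A threshold graph is a simple graph whose vertices can be ordered $v_1,\ldots,v_n$ so that for each $2\le i\le n$, $v_i$ is either adjacent to all of $v_1,\ldots,v_{i-1}$ (then $a_i=1$) or to none of them (then $a_i=0$); by convention $a_1=1$. Vertex $v_i$ is of type 1 if $a_i=1$ and of type 0 if $a_i=0$; $c$ and $z$ are the numbers of type 1 and type 0 vertices. The backwards zero position sequence $(b_1,\ldots,b_z)$: $b_i$ is the number of type 1 vertices appearing after the $i$-th type 0 vertex in the order $v_1,\ldots,v_n$. The forward one position sequence $(f_1,\ldots,f_c)$: $f_i$ is the number of type 0 vertices appearing before the $i$-th type 1 vertex in the order $v_1,\ldots,v_n$. Define $F_0=c$ and for $p\ge1$, $F_p=\sum_{i_1,\ldots,i_p=1}^{z} b_{i_1}\min\{b_{i_1},b_{i_2}\}\cdots\min\{b_{i_{p-1}},b_{i_p}\}\,b_{i_p}$. *)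

theory Defs
  imports Main "Jordan_Normal_Form.Matrix"
begin

definition simple_graph :: "'v set \<Rightarrow> ('v \<Rightarrow> 'v \<Rightarrow> bool) \<Rightarrow> bool" where
  "simple_graph V E \<longleftrightarrow> finite V \<and> (\<forall>x y. E x y \<longrightarrow> x \<in> V \<and> y \<in> V \<and> x \<noteq> y \<and> E y x)"

definition graph_connected :: "'v set \<Rightarrow> ('v \<Rightarrow> 'v \<Rightarrow> bool) \<Rightarrow> bool" where
  "graph_connected V E \<longleftrightarrow> (\<forall>x\<in>V. \<forall>y\<in>V. E\<^sup>*\<^sup>* x y)"

definition graph_edges :: "('v \<Rightarrow> 'v \<Rightarrow> bool) \<Rightarrow> 'v set set" where
  "graph_edges E = {{x, y} | x y. E x y}"

text \<open>Threshold ordering, 0-indexed: the list vs enumerates V as v_1,...,v_n,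
and the list as gives a_1,...,a_n (True = 1); a_1 = 1 by convention, and for
each later vertex, it is adjacent to all earlier vertices if a_i = 1 and to
none of them if a_i = 0.\<close>

definition threshold_order :: "'v set \<Rightarrow> ('v \<Rightarrow> 'v \<Rightarrow> bool) \<Rightarrow> 'v list \<Rightarrow> bool list \<Rightarrow> bool" where
  "threshold_order V E vs as \<longleftrightarrow>
     distinct vs \<and> set vs = V \<and> length as = length vs \<and> as \<noteq> [] \<and> hd as \<and>
     (\<forall>i < length vs. \<forall>j < i. E (vs ! i) (vs ! j) \<longleftrightarrow> as ! i)"

definition one_positions :: "bool list \<Rightarrow> nat list" where
  "one_positions as = filter (\<lambda>i. as ! i) [0..<length as]"

definition zero_positions :: "bool list \<Rightarrow> nat list" where
  "zero_positions as = filter (\<lambda>i. \<not> as ! i) [0..<length as]"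

definition fwd_one_seq :: "bool list \<Rightarrow> nat list" where
  "fwd_one_seq as = map (\<lambda>k. length (filter (\<lambda>j. \<not> as ! j) [0..<k])) (one_positions as)"

definition bwd_zero_seq :: "bool list \<Rightarrow> nat list" where
  "bwd_zero_seq as = map (\<lambda>k. length (filter (\<lambda>j. as ! j) [Suc k..<length as])) (zero_positions as)"

text \<open>F_0 = c; for p \<ge> 1, F_p is the sum over all index tuples (i_1,...,i_p)
(here functions g on {0..<p}) of b_{i_1} min(b_{i_1},b_{i_2}) ... min(b_{i_{p-1}},b_{i_p}) b_{i_p}.\<close>

definition F_num :: "bool list \<Rightarrow> nat \<Rightarrow> real" where
  "F_num as p =
     (let b = bwd_zero_seq as; z = length b in
      if p = 0 then real (length (one_positions as))
      else (\<Sum>g \<in> {0..<p} \<rightarrow>\<^sub>E {0..<z}.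
              real (b ! g 0) * (\<Prod>k<p - 1. real (min (b ! g k) (b ! g (Suc k)))) * real (b ! g (p - 1))))"

end

theory Submission
  imports Defs "Jordan_Normal_Form.Determinant"
begin

(* Let N be the z x c 0/1 matrix with N t j = 1 iff the t-th type 0 vertex precedes the j-th
   type 1 vertex. Counting common predecessors and successors gives Phi = N^T N,
   (min (b_t, b_s))_{t,s} = N N^T and b = N 1. Read as a sum over walks, F_p for p >= 1 is
   b^T (N N^T)^(p-1) b = 1^T (N^T N)^p 1 = 1^T Phi^p 1, and F_0 = c = 1^T 1. Expanding 1 in the
   orthonormal eigenbasis of Phi gives the spectral sum. Only the 0/1 sequence a_i enters. *)

definition matvec :: "nat \<Rightarrow> (nat \<Rightarrow> nat \<Rightarrow> real) \<Rightarrow> (nat \<Rightarrow> real) \<Rightarrow> nat \<Rightarrow> real" where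
  "matvec n M h t = (\<Sum>s<n. M t s * h s)"

lemma matvec_iterate_Suc:
  "(matvec n M ^^ Suc k) h t = (\<Sum>s<n. M t s * (matvec n M ^^ k) h s)"
  by (simp add: matvec_def)

lemma matvec_iterate_cong:
  assumes "\<And>s. s < n \<Longrightarrow> h s = h' s" and "t < n"
  shows "(matvec n M ^^ k) h t = (matvec n M ^^ k) h' t"
  using \<open>t < n\<close>
  by (induction k arbitrary: t)
    (auto simp: matvec_iterate_Suc assms(1) simp del: funpow.simps intro!: sum.cong)

lemma sum_PiE_upt_Suc:
  "(\<Sum>g \<in> {0..<Suc n} \<rightarrow>\<^sub>E Z. F g) = (\<Sum>g \<in> {0..<n} \<rightarrow>\<^sub>E Z. \<Sum>t\<in>Z. F (g(n := t)))"
proof -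
  have "{0..<Suc n} = insert n {0..<n}" by auto
  then have "(\<Sum>g \<in> {0..<Suc n} \<rightarrow>\<^sub>E Z. F g)
      = (\<Sum>g \<in> (\<lambda>(t, g). g(n := t)) ` (Z \<times> ({0..<n} \<rightarrow>\<^sub>E Z)). F g)"
    using PiE_insert_eq[of n "{0..<n}" "\<lambda>_. Z"] by simp
  also have "\<dots> = (\<Sum>(t, g) \<in> Z \<times> ({0..<n} \<rightarrow>\<^sub>E Z). F (g(n := t)))"
    by (subst sum.reindex)
      (auto intro: inj_combinator[of n "{0..<n}" "\<lambda>_. Z", simplified] simp: case_prod_beta)
  also have "\<dots> = (\<Sum>g \<in> {0..<n} \<rightarrow>\<^sub>E Z. \<Sum>t\<in>Z. F (g(n := t)))"
    by (simp add: sum.cartesian_product [symmetric] sum.swap [of _ Z])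
  finally show ?thesis .
qed

lemma sum_walks_eq_matvec_iterate:
  "(\<Sum>g \<in> {0..<Suc p} \<rightarrow>\<^sub>E {0..<z}. u (g 0) * (\<Prod>k<p. M (g k) (g (Suc k))) * h (g p))
   = (\<Sum>t<z. u t * (matvec z M ^^ p) h t)"
proof (induction p arbitrary: h)
  case 0
  show ?case by (subst sum_PiE_upt_Suc) (simp add: lessThan_atLeast0)
next
  case (Suc p)
  have "(\<Sum>g \<in> {0..<Suc (Suc p)} \<rightarrow>\<^sub>E {0..<z}.
            u (g 0) * (\<Prod>k<Suc p. M (g k) (g (Suc k))) * h (g (Suc p)))
      = (\<Sum>g \<in> {0..<Suc p} \<rightarrow>\<^sub>E {0..<z}. \<Sum>t\<in>{0..<z}.
            u (g 0) * ((\<Prod>k<p. M (g k) (g (Suc k))) * M (g p) t) * h t)"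
    unfolding sum_PiE_upt_Suc by (intro sum.cong refl) (simp add: lessThan_Suc)
  also have "\<dots> = (\<Sum>g \<in> {0..<Suc p} \<rightarrow>\<^sub>E {0..<z}.
            u (g 0) * (\<Prod>k<p. M (g k) (g (Suc k))) * matvec z M h (g p))"
    by (simp add: matvec_def sum_distrib_left mult.assoc lessThan_atLeast0)
  also have "\<dots> = (\<Sum>t<z. u t * (matvec z M ^^ Suc p) h t)"
    by (simp add: Suc.IH funpow_Suc_right del: funpow.simps)
  finally show ?case .
qed

lemma sum_mult_matvec_gram:
  assumes "\<And>j k. j < c \<Longrightarrow> k < c \<Longrightarrow> G j k = (\<Sum>t<z. A t j * A t k)"
  shows "(\<Sum>j<c. u j * matvec c G v j) = (\<Sum>t<z. (\<Sum>j<c. A t j * u j) * (\<Sum>k<c. A t k * v k))"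
proof -
  have "(\<Sum>j<c. u j * matvec c G v j) = (\<Sum>j<c. \<Sum>k<c. \<Sum>t<z. A t j * u j * (A t k * v k))"
    by (intro sum.cong refl)
      (simp add: matvec_def assms sum_distrib_left sum_distrib_right mult_ac)
  also have "\<dots> = (\<Sum>j<c. \<Sum>t<z. \<Sum>k<c. A t j * u j * (A t k * v k))"
    by (intro sum.cong refl sum.swap)
  also have "\<dots> = (\<Sum>t<z. \<Sum>j<c. \<Sum>k<c. A t j * u j * (A t k * v k))"
    by (rule sum.swap)
  also have "\<dots> = (\<Sum>t<z. (\<Sum>j<c. A t j * u j) * (\<Sum>k<c. A t k * v k))"
    by (simp add: sum_product)
  finally show ?thesis .
qed

lemma gram_matvec_iterate:
  assumes G: "\<And>j k. j < c \<Longrightarrow> k < c \<Longrightarrow> G j k = (\<Sum>t<z. A t j * A t k)"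
    and H: "\<And>t s. t < z \<Longrightarrow> s < z \<Longrightarrow> H t s = (\<Sum>j<c. A t j * A s j)"
    and "t < z"
  shows "(\<Sum>j<c. A t j * (matvec c G ^^ n) v j) = (matvec z H ^^ n) (\<lambda>s. \<Sum>j<c. A s j * v j) t"
  using \<open>t < z\<close>
proof (induction n arbitrary: t)
  case 0
  show ?case by simp
next
  case (Suc n)
  have "(\<Sum>j<c. A t j * (matvec c G ^^ Suc n) v j)
      = (\<Sum>s<z. (\<Sum>j<c. A s j * A t j) * (\<Sum>k<c. A s k * (matvec c G ^^ n) v k))"
    by (simp add: sum_mult_matvec_gram [OF G])
  also have "\<dots> = (\<Sum>s<z. H t s * (matvec z H ^^ n) (\<lambda>s. \<Sum>j<c. A s j * v j) s)"
    using Suc.prems by (intro sum.cong refl) (simp add: H Suc.IH mult.commute)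
  finally show ?case by (simp only: matvec_iterate_Suc)
qed

lemma gram_quadratic_form_iterate:
  assumes G: "\<And>j k. j < c \<Longrightarrow> k < c \<Longrightarrow> G j k = (\<Sum>t<z. A t j * A t k)"
    and H: "\<And>t s. t < z \<Longrightarrow> s < z \<Longrightarrow> H t s = (\<Sum>j<c. A t j * A s j)"
    and u: "\<And>t. t < z \<Longrightarrow> u t = (\<Sum>j<c. A t j * w j)"
  shows "(\<Sum>t<z. u t * (matvec z H ^^ n) u t) = (\<Sum>j<c. w j * (matvec c G ^^ Suc n) w j)"
proof -
  have "(\<Sum>t<z. u t * (matvec z H ^^ n) u t)
      = (\<Sum>t<z. (\<Sum>j<c. A t j * w j) * (\<Sum>k<c. A t k * (matvec c G ^^ n) w k))"
    by (intro sum.cong refl)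
      (simp add: u matvec_iterate_cong [of z u "\<lambda>t. \<Sum>j<c. A t j * w j"]
        gram_matvec_iterate [OF G H])
  also have "\<dots> = (\<Sum>j<c. w j * (matvec c G ^^ Suc n) w j)"
    by (simp add: sum_mult_matvec_gram [OF G])
  finally show ?thesis .
qed

lemma quadratic_form_iterate_spectral:
  assumes eig: "\<And>i r. i < c \<Longrightarrow> r < c \<Longrightarrow> matvec c G (X i) r = lam i * X i r"
    and complete: "\<And>r s. r < c \<Longrightarrow> s < c \<Longrightarrow> (\<Sum>i<c. X i r * X i s) = (if r = s then 1 else 0)"
  shows "(\<Sum>j<c. w j * (matvec c G ^^ p) w j) = (\<Sum>i<c. (\<Sum>r<c. w r * X i r)^2 * lam i ^ p)"
proof -
  define coord where "coord i = (\<Sum>r<c. w r * X i r)" for i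
  have expansion: "(matvec c G ^^ p) w j = (\<Sum>i<c. coord i * lam i ^ p * X i j)" if "j < c" for j
    using that
  proof (induction p arbitrary: j)
    case 0
    have "(\<Sum>i<c. coord i * lam i ^ 0 * X i j) = (\<Sum>i<c. \<Sum>r<c. w r * (X i r * X i j))"
      by (simp add: coord_def sum_distrib_right mult.assoc)
    also have "\<dots> = (\<Sum>r<c. \<Sum>i<c. w r * (X i r * X i j))"
      by (rule sum.swap)
    also have "\<dots> = (\<Sum>r<c. if r = j then w r else 0)"
      using 0 by (intro sum.cong refl) (simp add: complete flip: sum_distrib_left)
    also have "\<dots> = w j"
      using 0 by simp
    finally show ?case by simp
  next
    case (Suc p)
    have "(matvec c G ^^ Suc p) w j = (\<Sum>k<c. \<Sum>i<c. coord i * lam i ^ p * (G j k * X i k))"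
      by (simp add: matvec_iterate_Suc Suc.IH sum_distrib_left mult_ac del: funpow.simps)
    also have "\<dots> = (\<Sum>i<c. \<Sum>k<c. coord i * lam i ^ p * (G j k * X i k))"
      by (rule sum.swap)
    also have "\<dots> = (\<Sum>i<c. coord i * lam i ^ p * matvec c G (X i) j)"
      by (simp add: matvec_def sum_distrib_left)
    also have "\<dots> = (\<Sum>i<c. coord i * lam i ^ Suc p * X i j)"
      using Suc.prems by (intro sum.cong refl) (simp add: eig)
    finally show ?case .
  qed
  have "(\<Sum>j<c. w j * (matvec c G ^^ p) w j) = (\<Sum>j<c. \<Sum>i<c. coord i * lam i ^ p * (w j * X i j))"
    by (simp add: expansion sum_distrib_left mult_ac)
  also have "\<dots> = (\<Sum>i<c. \<Sum>j<c. coord i * lam i ^ p * (w j * X i j))"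
    by (rule sum.swap)
  also have "\<dots> = (\<Sum>i<c. coord i * lam i ^ p * coord i)"
    by (simp only: coord_def [symmetric] flip: sum_distrib_left)
  finally show ?thesis by (simp add: coord_def power2_eq_square mult_ac)
qed

lemma orthonormal_completeness:
  fixes x :: "nat \<Rightarrow> real vec"
  assumes carrier: "\<And>i. i < c \<Longrightarrow> x i \<in> carrier_vec c"
    and orthonormal: "\<And>i j. i < c \<Longrightarrow> j < c \<Longrightarrow> x i \<bullet> x j = (if i = j then 1 else 0)"
    and "r < c" "s < c"
  shows "(\<Sum>i<c. x i $ r * x i $ s) = (if r = s then 1 else 0)"
proof -
  define X where "X = mat c c (\<lambda>(r, i). x i $ r)"
  have "transpose_mat X * X = 1\<^sub>m c"
  proof (rule eq_matI)
    fix i j assume ij: "i < dim_row (1\<^sub>m c)" "j < dim_col (1\<^sub>m c)"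
    then have "(transpose_mat X * X) $$ (i, j) = x i \<bullet> x j"
      using carrier[of i] carrier[of j] by (auto simp: X_def scalar_prod_def)
    then show "(transpose_mat X * X) $$ (i, j) = 1\<^sub>m c $$ (i, j)"
      using ij orthonormal by auto
  qed (auto simp: X_def)
  then have "X * transpose_mat X = 1\<^sub>m c"
    by (intro mat_mult_left_right_inverse [of "transpose_mat X" c]) (auto simp: X_def)
  then have "(X * transpose_mat X) $$ (r, s) = 1\<^sub>m c $$ (r, s)" by simp
  then show ?thesis using \<open>r < c\<close> \<open>s < c\<close> by (auto simp: X_def scalar_prod_def lessThan_atLeast0)
qed

lemma filter_less_upt: "filter (\<lambda>i. P i \<and> i < k) [0..<L] = filter P [0..<min k L]"
  by (induction L) (auto simp: min_def not_less_eq_eq le_Suc_eq)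

lemma filter_greater_upt: "filter (\<lambda>i. P i \<and> k < i) [0..<L] = filter P [Suc k..<L]"
  by (induction L) auto

definition zero_before_one :: "bool list \<Rightarrow> nat \<Rightarrow> nat \<Rightarrow> real" where
  "zero_before_one as t j = of_bool (zero_positions as ! t < one_positions as ! j)"

lemma length_fwd_one_seq: "length (fwd_one_seq as) = length (one_positions as)"
  by (simp add: fwd_one_seq_def)

lemma length_bwd_zero_seq: "length (bwd_zero_seq as) = length (zero_positions as)"
  by (simp add: bwd_zero_seq_def)

lemma one_positions_nth:
  "j < length (one_positions as) \<Longrightarrow> one_positions as ! j < length as \<and> as ! (one_positions as ! j)"
  using nth_mem [of j "one_positions as"] by (simp add: one_positions_def)

lemma sorted_one_positions: "sorted (one_positions as)"
  by (simp add: one_positions_def sorted_wrt_filter)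

lemma fwd_one_seq_nth_eq_sum:
  assumes "j < length (one_positions as)"
  shows "real (fwd_one_seq as ! j) = (\<Sum>t < length (zero_positions as). zero_before_one as t j)"
proof -
  let ?Z = "zero_positions as" and ?o = "one_positions as ! j"
  have "(\<Sum>t < length ?Z. zero_before_one as t j) = real (card {t. t < length ?Z \<and> ?Z ! t < ?o})"
    by (simp add: zero_before_one_def Collect_conj_eq lessThan_def Int_commute)
  also have "card {t. t < length ?Z \<and> ?Z ! t < ?o} = length (filter (\<lambda>i. i < ?o) ?Z)"
    by (simp add: length_filter_conv_card)
  also have "filter (\<lambda>i. i < ?o) ?Z = filter (\<lambda>i. \<not> as ! i) [0..<?o]"
    using one_positions_nth [OF assms] by (simp add: zero_positions_def filter_less_upt)
  finally show ?thesis
    using assms by (simp add: fwd_one_seq_def)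
qed

lemma bwd_zero_seq_nth_eq_sum:
  assumes "t < length (zero_positions as)"
  shows "real (bwd_zero_seq as ! t) = (\<Sum>j < length (one_positions as). zero_before_one as t j)"
proof -
  let ?O = "one_positions as" and ?z = "zero_positions as ! t"
  have "(\<Sum>j < length ?O. zero_before_one as t j) = real (card {j. j < length ?O \<and> ?z < ?O ! j})"
    by (simp add: zero_before_one_def Collect_conj_eq lessThan_def Int_commute)
  also have "card {j. j < length ?O \<and> ?z < ?O ! j} = length (filter (\<lambda>i. ?z < i) ?O)"
    by (simp add: length_filter_conv_card)
  also have "filter (\<lambda>i. ?z < i) ?O = filter (\<lambda>i. as ! i) [Suc ?z..<length as]"
    by (simp add: one_positions_def filter_greater_upt)
  finally show ?thesis
    using assms by (simp add: bwd_zero_seq_def)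
qed

lemma fwd_one_seq_min_eq_gram:
  assumes "j < length (one_positions as)" "k < length (one_positions as)"
  shows "real (fwd_one_seq as ! min j k)
    = (\<Sum>t < length (zero_positions as). zero_before_one as t j * zero_before_one as t k)"
proof -
  have "one_positions as ! min j k = min (one_positions as ! j) (one_positions as ! k)"
    using sorted_nth_mono [OF sorted_one_positions [of as], of j k]
      sorted_nth_mono [OF sorted_one_positions [of as], of k j]
      assms by (auto simp: min_def)
  then have "zero_before_one as t (min j k) = zero_before_one as t j * zero_before_one as t k" for t
    by (simp add: zero_before_one_def)
  then show ?thesis
    using fwd_one_seq_nth_eq_sum [of "min j k" as] assms by simp
qed

lemma bwd_zero_seq_min_eq_gram:
  assumes "t < length (zero_positions as)" "s < length (zero_positions as)"
  shows "real (min (bwd_zero_seq as ! t) (bwd_zero_seq as ! s))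
    = (\<Sum>j < length (one_positions as). zero_before_one as t j * zero_before_one as s j)"
proof -
  let ?A = "zero_before_one as" and ?Z = "zero_positions as" and ?c = "length (one_positions as)"
  have ordered: "real (min (bwd_zero_seq as ! t) (bwd_zero_seq as ! s)) = (\<Sum>j<?c. ?A t j * ?A s j)"
    if "t < length ?Z" "s < length ?Z" "?Z ! t \<le> ?Z ! s" for t s
  proof -
    have "real (bwd_zero_seq as ! s) \<le> real (bwd_zero_seq as ! t)"
      unfolding bwd_zero_seq_nth_eq_sum [OF that(1)] bwd_zero_seq_nth_eq_sum [OF that(2)]
      by (intro sum_mono) (use that(3) in \<open>simp add: zero_before_one_def\<close>)
    then have "real (min (bwd_zero_seq as ! t) (bwd_zero_seq as ! s)) = real (bwd_zero_seq as ! s)"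
      by (simp add: min_absorb2)
    also have "\<dots> = (\<Sum>j<?c. ?A s j)"
      by (rule bwd_zero_seq_nth_eq_sum [OF that(2)])
    also have "\<dots> = (\<Sum>j<?c. ?A t j * ?A s j)"
      using that(3) by (intro sum.cong refl) (auto simp: zero_before_one_def)
    finally show ?thesis .
  qed
  show ?thesis
  proof (cases "?Z ! t \<le> ?Z ! s")
    case True
    with ordered assms show ?thesis by blast
  next
    case False
    with ordered [of s t] assms show ?thesis by (simp add: min.commute mult.commute)
  qed
qed

lemma F_num_eq_quadratic_form:
  fixes as :: "bool list"
  defines "c \<equiv> length (fwd_one_seq as)"
  shows "F_num as p = (\<Sum>j<c. (matvec c (\<lambda>j k. real (fwd_one_seq as ! min j k)) ^^ p) (\<lambda>_. 1) j)"
proof (cases p)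
  case 0
  then show ?thesis by (simp add: F_num_def c_def length_fwd_one_seq)
next
  case (Suc n)
  let ?z = "length (zero_positions as)" and ?A = "zero_before_one as"
  let ?b = "\<lambda>t. real (bwd_zero_seq as ! t)"
  let ?M = "\<lambda>t s. real (min (bwd_zero_seq as ! t) (bwd_zero_seq as ! s))"
  have c: "c = length (one_positions as)" by (simp add: c_def length_fwd_one_seq)
  have "F_num as p
      = (\<Sum>g \<in> {0..<Suc n} \<rightarrow>\<^sub>E {0..<?z}. ?b (g 0) * (\<Prod>k<n. ?M (g k) (g (Suc k))) * ?b (g n))"
    by (simp add: F_num_def Suc Let_def length_bwd_zero_seq)
  also have "\<dots> = (\<Sum>t<?z. ?b t * (matvec ?z ?M ^^ n) ?b t)"
    by (rule sum_walks_eq_matvec_iterate)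
  also have "\<dots> = (\<Sum>j<c. 1 * (matvec c (\<lambda>j k. real (fwd_one_seq as ! min j k)) ^^ Suc n) (\<lambda>_. 1) j)"
  proof (rule gram_quadratic_form_iterate)
    show "real (fwd_one_seq as ! min j k) = (\<Sum>t<?z. ?A t j * ?A t k)" if "j < c" "k < c" for j k
      using fwd_one_seq_min_eq_gram that unfolding c by blast
    show "?M t s = (\<Sum>j<c. ?A t j * ?A s j)" if "t < ?z" "s < ?z" for t s
      using bwd_zero_seq_min_eq_gram that unfolding c by blast
    show "?b t = (\<Sum>j<c. ?A t j * 1)" if "t < ?z" for t
      using bwd_zero_seq_nth_eq_sum that unfolding c by simp
  qed
  finally show ?thesis by (simp add: Suc)
qed

theorem corollaryA4:
  fixes V :: "'v set" and E :: "'v \<Rightarrow> 'v \<Rightarrow> bool" and vs :: "'v list" and as :: "bool list"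
    and lam :: "nat \<Rightarrow> real" and x :: "nat \<Rightarrow> real vec" and p :: nat
  assumes "simple_graph V E"
    and "threshold_order V E vs as"
    and "graph_connected V E"
    and "card V \<ge> 4"
    and "card V - 1 < card (graph_edges E)"
    and "card (graph_edges E) < card V choose 2"
    and "\<And>i. i < length (fwd_one_seq as) \<Longrightarrow> x i \<in> carrier_vec (length (fwd_one_seq as))"
    and "\<And>i. i < length (fwd_one_seq as) \<Longrightarrow>
           mat (length (fwd_one_seq as)) (length (fwd_one_seq as))
               (\<lambda>(i, j). real (fwd_one_seq as ! min i j)) *\<^sub>v x i = lam i \<cdot>\<^sub>v x i"
    and "\<And>i j. i < length (fwd_one_seq as) \<Longrightarrow> j < length (fwd_one_seq as) \<Longrightarrow>
           x i \<bullet> x j = (if i = j then 1 else 0)"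
  shows "F_num as p =
           (\<Sum>i < length (fwd_one_seq as). (vec (length (fwd_one_seq as)) (\<lambda>_. 1) \<bullet> x i)^2 * lam i ^ p)"
proof -
  let ?c = "length (fwd_one_seq as)" and ?Phi = "\<lambda>j k. real (fwd_one_seq as ! min j k)"
  note carrier = assms(7) and eigenvector = assms(8) and orthonormal = assms(9)
  have eig: "matvec ?c ?Phi (\<lambda>k. x i $ k) r = lam i * x i $ r" if "i < ?c" "r < ?c" for i r
    using arg_cong [OF eigenvector [OF that(1)], of "\<lambda>v. v $ r"] carrier [OF that(1)] that
    by (simp add: matvec_def scalar_prod_def lessThan_atLeast0)
  have dot_one: "vec ?c (\<lambda>_. 1) \<bullet> x i = (\<Sum>r<?c. 1 * x i $ r)" if "i < ?c" for i
    using carrier [OF that] by (simp add: scalar_prod_def lessThan_atLeast0)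
  have "F_num as p = (\<Sum>j<?c. 1 * (matvec ?c ?Phi ^^ p) (\<lambda>_. 1) j)"
    by (simp add: F_num_eq_quadratic_form)
  also have "\<dots> = (\<Sum>i<?c. (\<Sum>r<?c. 1 * x i $ r)^2 * lam i ^ p)"
    by (rule quadratic_form_iterate_spectral [OF eig orthonormal_completeness])
      (use carrier orthonormal in auto)
  finally show ?thesis
    by (simp add: dot_one)
qed

end
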